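(* Let $d \ge 0$ be an integer, let $V(K_n) = X \cup Y$ be a partition, and let $c : E(K_n) \to \{R,G,B\}$ be an almost Gallai colouring of $K_n$ such that $|N_G(y) \cap X| \le d$ for all $y \in Y$. Then \[ \tau^{G}_{\mathrm{rb}}(X,Y) \le \frac{e}{2}(d+1)\,|X| \log |X|. \]
   Context: A colouring of $E(K_n)$ is almost Gallai if no two rainbow triangles share an edge, where a triangle is rainbow if its three edges have pairwise distinct colours. $N_G(y)$ is the set of vertices joined to $y$ by a green edge. For disjoint $X, Y \subseteq V(K_n)$ and a colour $q$, $\tau^{q}_{\mathrm{rb}}(X,Y)$ is the number of rainbow triangles $y x_1 x_2$ with $y \in Y$, $x_1, x_2 \in X$ and $x_1x_2$ coloured $q$. Logarithms are in base 2. *)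

theory Defs
  imports Complex_Main
begin

datatype colour = R | G | B

text \<open>A colouring of the edges of the complete graph on vertex set V is a function
  c with c u v = c v u for distinct u, v in V (values on the diagonal are irrelevant).\<close>
definition edge_colouring :: "'a set \<Rightarrow> ('a \<Rightarrow> 'a \<Rightarrow> colour) \<Rightarrow> bool" where
  "edge_colouring V c \<longleftrightarrow> (\<forall>u\<in>V. \<forall>v\<in>V. u \<noteq> v \<longrightarrow> c u v = c v u)"

definition rainbow :: "('a \<Rightarrow> 'a \<Rightarrow> colour) \<Rightarrow> 'a \<Rightarrow> 'a \<Rightarrow> 'a \<Rightarrow> bool" where
  "rainbow c a b d \<longleftrightarrow> a \<noteq> b \<and> a \<noteq> d \<and> b \<noteq> d \<and>
     c a b \<noteq> c a d \<and> c a b \<noteq> c b d \<and> c a d \<noteq> c b d"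

text \<open>No two (distinct) rainbow triangles share an edge.\<close>
definition almost_gallai :: "'a set \<Rightarrow> ('a \<Rightarrow> 'a \<Rightarrow> colour) \<Rightarrow> bool" where
  "almost_gallai V c \<longleftrightarrow> (\<forall>a\<in>V. \<forall>b\<in>V. \<forall>u\<in>V. \<forall>v\<in>V.
      rainbow c a b u \<and> rainbow c a b v \<longrightarrow> u = v)"

definition green_nbhd :: "'a set \<Rightarrow> ('a \<Rightarrow> 'a \<Rightarrow> colour) \<Rightarrow> 'a \<Rightarrow> 'a set" where
  "green_nbhd V c y = {x \<in> V. x \<noteq> y \<and> c y x = G}"

text \<open>Number of rainbow triangles y x1 x2 with y in Y, x1, x2 in X and x1x2 coloured q;
  a triangle is identified by its apex y and the unordered pair {x1,x2}.\<close>
definition tau_rb :: "colour \<Rightarrow> ('a \<Rightarrow> 'a \<Rightarrow> colour) \<Rightarrow> 'a set \<Rightarrow> 'a set \<Rightarrow> nat" where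
  "tau_rb q c X Y = card {(y, {x1, x2}) | y x1 x2. y \<in> Y \<and> x1 \<in> X \<and> x2 \<in> X \<and>
       c x1 x2 = q \<and> rainbow c y x1 x2}"

end

theory Submission
  imports Defs "HOL-Analysis.Convex"
begin

(* Choose a random set S of vertices of X, each independently with probability
   p = 1/(d+1), and count the rainbow triangles y x1 x2 with green base x1x2 inside S
   whose apex y sends no green edge into S.  A fixed triangle survives with probability
   at least p^2 (1-p)^d >= p^2 / e, since y has at most d green neighbours in X.

   For a fixed S, every surviving apex colours S red/blue.  The bases of its surviving
   triangles form a matching of red-blue edges (almost Gallai: two rainbow triangles
   y x1 x2, y x1 x3 share the edge y x1); distinct apexes have disjoint matchings (they
   would share the base); and a base of one apex split red/blue by another apex y is
   a base of y as well.  Such a family of cut matchings on s vertices has at most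
   (s/2) log s edges: split S along one cut into parts of sizes a and b; all other
   matchings live inside the parts, the cut carries at most min(a, b) edges, and
   a log a + b log b + 2 min(a, b) <= (a + b) log (a + b). *)

lemma two_powr_le_one_plus:
  fixes x :: real
  assumes "0 \<le> x" "x \<le> 1"
  shows "2 powr x \<le> 1 + x"
proof -
  have "exp ((1 - x) * 0 + x * ln 2) \<le> (1 - x) * exp 0 + x * exp (ln 2)"
    using convex_onD[OF exp_convex, of x 0 "ln 2"] assms by simp
  then show ?thesis
    by (simp add: powr_def mult.commute)
qed

lemma half_mult_log2_add_min_le:
  fixes a b :: real
  assumes "0 < a" "0 < b"
  shows "a / 2 * log 2 a + b / 2 * log 2 b + min a b \<le> (a + b) / 2 * log 2 (a + b)"
proof -
  have ordered: "a / 2 * log 2 a + b / 2 * log 2 b + a \<le> (a + b) / 2 * log 2 (a + b)"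
    if "0 < a" "a \<le> b" for a b :: real
  proof -
    have "log 2 2 \<le> log 2 ((a + b) / a)"
      using that by (subst log_le_cancel_iff) (auto simp: field_simps)
    then have "1 \<le> log 2 (a + b) - log 2 a"
      using that by (simp add: log_divide)
    then have small: "a \<le> a * (log 2 (a + b) - log 2 a)"
      using that by simp
    have "2 powr (a / b) \<le> 1 + a / b"
      using that by (intro two_powr_le_one_plus) auto
    then have "a / b \<le> log 2 (1 + a / b)"
      using that by (subst le_log_iff) (auto simp: add_pos_nonneg)
    also have "1 + a / b = (a + b) / b"
      using that by (simp add: field_simps)
    finally have "a / b \<le> log 2 (a + b) - log 2 b"
      using that by (simp add: log_divide)
    then have large: "a \<le> b * (log 2 (a + b) - log 2 b)"
      using that by (simp add: field_simps)
    from small large show ?thesis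
      by (simp add: field_simps)
  qed
  show ?thesis
  proof (cases "a \<le> b")
    case True
    then show ?thesis using ordered[of a b] assms by simp
  next
    case False
    then show ?thesis using ordered[of b a] assms by (simp add: add.commute)
  qed
qed

lemma card_crossing_matching_le:
  assumes "finite T"
    and cross: "\<forall>e\<in>N. \<exists>u v. e = {u, v} \<and> u \<in> T \<and> v \<notin> T"
    and matching: "\<forall>u v w. {u, v} \<in> N \<longrightarrow> {u, w} \<in> N \<longrightarrow> v = w"
  shows "card N \<le> card T"
proof -
  have "inj_on (\<lambda>e. e \<inter> T) N"
  proof (rule inj_onI)
    fix e e' assume "e \<in> N" "e' \<in> N" and eq: "e \<inter> T = e' \<inter> T"
    then obtain u v u' v' where "e = {u, v}" "u \<in> T" "v \<notin> T" "e' = {u', v'}" "u' \<in> T" "v' \<notin> T"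
      using cross by meson
    with eq \<open>e \<in> N\<close> \<open>e' \<in> N\<close> matching show "e = e'" by auto
  qed
  moreover have "(\<lambda>e. e \<inter> T) ` N \<subseteq> (\<lambda>u. {u}) ` T"
    using cross by auto
  ultimately have "card N \<le> card ((\<lambda>u. {u}) ` T)"
    by (metis assms(1) card_inj_on_le finite_imageI)
  also have "\<dots> \<le> card T"
    by (rule card_image_le[OF assms(1)])
  finally show ?thesis .
qed

locale cut_matching_family =
  fixes S :: "'a set" and I :: "'i set" and M :: "'i \<Rightarrow> 'a set set" and A :: "'i \<Rightarrow> 'a set"
  assumes edge_cut: "i \<in> I \<Longrightarrow> e \<in> M i \<Longrightarrow> \<exists>u v. e = {u, v} \<and> u \<in> S \<and> v \<in> S \<and> u \<in> A i \<and> v \<notin> A i"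
    and matching: "i \<in> I \<Longrightarrow> {u, v} \<in> M i \<Longrightarrow> {u, w} \<in> M i \<Longrightarrow> v = w"
    and disjoint: "i \<in> I \<Longrightarrow> j \<in> I \<Longrightarrow> i \<noteq> j \<Longrightarrow> M i \<inter> M j = {}"
    and cut_edges_closed:
      "i \<in> I \<Longrightarrow> j \<in> I \<Longrightarrow> {u, v} \<in> M j \<Longrightarrow> u \<in> A i \<Longrightarrow> v \<notin> A i \<Longrightarrow> {u, v} \<in> M i"
begin

lemma restrict:
  assumes "J \<subseteq> I"
  shows "cut_matching_family T J (\<lambda>i. {e \<in> M i. e \<subseteq> T}) A"
proof
  fix i e assume "i \<in> J" "e \<in> {e \<in> M i. e \<subseteq> T}"
  then show "\<exists>u v. e = {u, v} \<and> u \<in> T \<and> v \<in> T \<and> u \<in> A i \<and> v \<notin> A i"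
    using assms edge_cut[of i e] by blast
next
  fix i u v w assume "i \<in> J" "{u, v} \<in> {e \<in> M i. e \<subseteq> T}" "{u, w} \<in> {e \<in> M i. e \<subseteq> T}"
  then show "v = w"
    using assms matching[of i u v w] by blast
next
  fix i j assume "i \<in> J" "j \<in> J" "i \<noteq> j"
  then show "{e \<in> M i. e \<subseteq> T} \<inter> {e \<in> M j. e \<subseteq> T} = {}"
    using assms disjoint[of i j] by blast
next
  fix i j u v assume "i \<in> J" "j \<in> J" "{u, v} \<in> {e \<in> M j. e \<subseteq> T}" "u \<in> A i" "v \<notin> A i"
  then show "{u, v} \<in> {e \<in> M i. e \<subseteq> T}"
    using assms cut_edges_closed[of i j u v] by blast
qed

lemma finite_edges: "finite S \<Longrightarrow> i \<in> I \<Longrightarrow> finite (M i)"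
  by (rule finite_subset[of _ "Pow S"]) (auto dest: edge_cut)

lemma card_split:
  assumes "finite S" "i0 \<in> I" "i \<in> I" "i \<noteq> i0"
  shows "card (M i) = card {e \<in> M i. e \<subseteq> S \<inter> A i0} + card {e \<in> M i. e \<subseteq> S - A i0}"
proof -
  have uncut: "e \<subseteq> S \<inter> A i0 \<or> e \<subseteq> S - A i0" if e: "e \<in> M i" for e
  proof -
    obtain u v where uv: "e = {u, v}" "u \<in> S" "v \<in> S"
      using edge_cut[OF \<open>i \<in> I\<close> e] by blast
    \<comment> \<open>an edge of \<open>M i\<close> cut by \<open>A i0\<close> would also lie in \<open>M i0\<close>\<close>
    have "{u, v} \<notin> M i0"
      using disjoint[of i i0] assms(2-4) e uv by blast
    then have "\<not> (u \<in> A i0 \<and> v \<notin> A i0) \<and> \<not> (v \<in> A i0 \<and> u \<notin> A i0)"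
      using cut_edges_closed[of i0 i] assms(2,3) e uv by (metis insert_commute)
    then show ?thesis
      using uv by blast
  qed
  have "M i = {e \<in> M i. e \<subseteq> S \<inter> A i0} \<union> {e \<in> M i. e \<subseteq> S - A i0}"
    using uncut by blast
  moreover have "{e \<in> M i. e \<subseteq> S \<inter> A i0} \<inter> {e \<in> M i. e \<subseteq> S - A i0} = {}"
    using edge_cut[OF \<open>i \<in> I\<close>] by blast
  ultimately show ?thesis
    using finite_edges[OF assms(1,3)] by (metis card_Un_disjoint finite_Un)
qed

end

lemma sum_card_cut_matching_family_le:
  assumes "finite S" "finite I" "cut_matching_family S I M A"
  shows "real (\<Sum>i\<in>I. card (M i)) \<le> real (card S) / 2 * log 2 (card S)"
  using assms
proof (induction "card S" arbitrary: S I M rule: less_induct)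
  case less
  interpret family: cut_matching_family S I M A
    by (rule less.prems(3))
  show ?case
  proof (cases "\<forall>i\<in>I. M i = {}")
    case True
    then show ?thesis
      by (cases "card S = 0") auto
  next
    case False
    then obtain i0 u0 v0 where i0: "i0 \<in> I" "{u0, v0} \<in> M i0"
      and uv0: "u0 \<in> S" "v0 \<in> S" "u0 \<in> A i0" "v0 \<notin> A i0"
      using family.edge_cut by (metis all_not_in_conv)
    define P where "P = S \<inter> A i0"
    define Q where "Q = S - A i0"
    define J where "J = I - {i0}"
    have finite: "finite P" "finite Q" "finite J"
      using less.prems(1,2) unfolding P_def Q_def J_def by auto
    have card_less: "card P < card S" "card Q < card S"
      using uv0 less.prems(1) unfolding P_def Q_def by (auto intro!: psubset_card_mono)
    have IH: "real (\<Sum>i\<in>J. card {e \<in> M i. e \<subseteq> T}) \<le> real (card T) / 2 * log 2 (card T)"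
      if "T \<in> {P, Q}" for T
    proof (rule less.hyps)
      show "card T < card S" "finite T"
        using that card_less finite by auto
      show "cut_matching_family T J (\<lambda>i. {e \<in> M i. e \<subseteq> T}) A"
        by (rule family.restrict) (auto simp: J_def)
    qed (use finite in simp)
    have "card (M i0) \<le> card P"
    proof (rule card_crossing_matching_le)
      show "\<forall>e\<in>M i0. \<exists>u v. e = {u, v} \<and> u \<in> P \<and> v \<notin> P"
        using family.edge_cut[OF i0(1)] unfolding P_def by blast
    qed (use family.matching[OF i0(1)] finite in auto)
    moreover have "card (M i0) \<le> card Q"
    proof (rule card_crossing_matching_le)
      show "\<forall>e\<in>M i0. \<exists>u v. e = {u, v} \<and> u \<in> Q \<and> v \<notin> Q"
        using family.edge_cut[OF i0(1)] unfolding Q_def by (metis Diff_iff insert_commute)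
    qed (use family.matching[OF i0(1)] finite in auto)
    moreover have "(\<Sum>i\<in>I. card (M i))
        = card (M i0) + (\<Sum>i\<in>J. card {e \<in> M i. e \<subseteq> P}) + (\<Sum>i\<in>J. card {e \<in> M i. e \<subseteq> Q})"
      using less.prems(1,2) i0(1)
      by (simp add: J_def P_def Q_def sum.remove family.card_split sum.distrib)
    moreover have "card S = card P + card Q"
      unfolding P_def Q_def by (rule card_Int_Diff[OF less.prems(1)])
    moreover have "card P > 0" "card Q > 0"
      using uv0 finite unfolding P_def Q_def by (auto simp: card_gt_0_iff)
    ultimately show ?thesis
      using IH[of P] IH[of Q] half_mult_log2_add_min_le[of "card P" "card Q"] by simp
  qed
qed

(* The probability that a random subset of X, containing each element independently
   with probability p, equals S. *)
definition subset_weight :: "real \<Rightarrow> 'a set \<Rightarrow> 'a set \<Rightarrow> real" where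
  "subset_weight p X S = p ^ card S * (1 - p) ^ card (X - S)"

lemma subset_weight_nonneg: "0 \<le> p \<Longrightarrow> p \<le> 1 \<Longrightarrow> 0 \<le> subset_weight p X S"
  by (simp add: subset_weight_def)

lemma prod_if_mem_zero:
  fixes a :: real
  assumes "finite T"
  shows "(\<Prod>x\<in>T. if x \<in> C then 0 else a) = (if T \<inter> C = {} then a ^ card T else 0)"
proof (cases "T \<inter> C = {}")
  case True
  then have "(\<Prod>x\<in>T. if x \<in> C then 0 else a) = (\<Prod>x\<in>T. a)"
    by (intro prod.cong) auto
  then show ?thesis
    using True by simp
qed (use assms in \<open>auto intro: prod_zero\<close>)

lemma sum_subset_weight_between:
  fixes p :: real
  assumes "finite X" "A \<subseteq> X" "C \<subseteq> X" "A \<inter> C = {}"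
  shows "(\<Sum>S\<in>Pow X. if A \<subseteq> S \<and> S \<inter> C = {} then subset_weight p X S else 0)
    = p ^ card A * (1 - p) ^ card C"
proof -
  define f where "f = (\<lambda>x. if x \<in> C then 0 else p)"
  define g where "g = (\<lambda>x. if x \<in> A then 0 else 1 - p)"
  have "p ^ card A * (1 - p) ^ card C
      = (\<Prod>x\<in>X. (if x \<in> A then p else 1) * (if x \<in> C then 1 - p else 1))"
    using assms by (simp add: prod.distrib prod.If_cases Int_absorb1)
  also have "\<dots> = (\<Prod>x\<in>X. f x + g x)"
    using assms(4) by (intro prod.cong) (auto simp: f_def g_def)
  also have "\<dots> = (\<Sum>S\<in>Pow X. prod f S * prod g (X - S))"
    by (rule prod_add[OF assms(1)])
  also have "\<dots> = (\<Sum>S\<in>Pow X. if A \<subseteq> S \<and> S \<inter> C = {} then subset_weight p X S else 0)"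
  proof (rule sum.cong[OF refl])
    fix S assume "S \<in> Pow X"
    then have "finite S" "finite (X - S)" "(X - S) \<inter> A = {} \<longleftrightarrow> A \<subseteq> S"
      using assms(1,2) finite_subset by auto
    then show "prod f S * prod g (X - S)
        = (if A \<subseteq> S \<and> S \<inter> C = {} then subset_weight p X S else 0)"
      unfolding f_def g_def subset_weight_def by (simp add: prod_if_mem_zero)
  qed
  finally show ?thesis ..
qed

lemma sum_subset_weight_card:
  assumes "finite X"
  shows "(\<Sum>S\<in>Pow X. subset_weight p X S * real (card S)) = p * real (card X)"
proof -
  have "(\<Sum>S\<in>Pow X. subset_weight p X S * real (card S))
      = (\<Sum>S\<in>Pow X. \<Sum>x\<in>X. if x \<in> S then subset_weight p X S else 0)"
    using assms by (intro sum.cong refl) (auto simp: sum.If_cases Int_absorb1)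
  also have "\<dots> = (\<Sum>x\<in>X. \<Sum>S\<in>Pow X. if x \<in> S then subset_weight p X S else 0)"
    by (rule sum.swap)
  also have "\<dots> = (\<Sum>x\<in>X. p)"
    using sum_subset_weight_between[OF assms, of "{_}" "{}" p] by (intro sum.cong refl) simp
  finally show ?thesis
    by simp
qed

lemma card_le_by_random_subset:
  fixes p \<beta> :: real and E :: "'k set" and A C :: "'k \<Rightarrow> 'a set"
  assumes "finite X" "finite E" "0 \<le> p" "p \<le> 1"
    and events: "\<And>k. k \<in> E \<Longrightarrow> A k \<subseteq> X \<and> C k \<subseteq> X \<and> A k \<inter> C k = {} \<and> card (A k) = a \<and> card (C k) \<le> d"
    and count: "\<And>S. S \<subseteq> X \<Longrightarrow> real (card {k \<in> E. A k \<subseteq> S \<and> S \<inter> C k = {}}) \<le> \<beta> * real (card S)"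
  shows "p ^ a * (1 - p) ^ d * real (card E) \<le> \<beta> * p * real (card X)"
proof -
  let ?w = "subset_weight p X"
  have "p ^ a * (1 - p) ^ d * real (card E) = (\<Sum>k\<in>E. p ^ a * (1 - p) ^ d)"
    by simp
  also have "\<dots> \<le> (\<Sum>k\<in>E. p ^ card (A k) * (1 - p) ^ card (C k))"
  proof (rule sum_mono)
    fix k assume "k \<in> E"
    then show "p ^ a * (1 - p) ^ d \<le> p ^ card (A k) * (1 - p) ^ card (C k)"
      using events[of k] assms(3,4) by (simp add: mult_left_mono power_decreasing)
  qed
  also have "\<dots> = (\<Sum>k\<in>E. \<Sum>S\<in>Pow X. if A k \<subseteq> S \<and> S \<inter> C k = {} then ?w S else 0)"
    using assms(1) events by (simp add: sum_subset_weight_between)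
  also have "\<dots> = (\<Sum>S\<in>Pow X. ?w S * real (card {k \<in> E. A k \<subseteq> S \<and> S \<inter> C k = {}}))"
    using assms(2) by (subst sum.swap) (simp add: sum.If_cases Int_def mult.commute)
  also have "\<dots> \<le> (\<Sum>S\<in>Pow X. ?w S * (\<beta> * real (card S)))"
    using assms(3,4) count by (intro sum_mono mult_left_mono subset_weight_nonneg) auto
  also have "\<dots> = \<beta> * (\<Sum>S\<in>Pow X. ?w S * real (card S))"
    by (simp add: sum_distrib_left mult_ac)
  also have "\<dots> = \<beta> * p * real (card X)"
    by (simp add: sum_subset_weight_card[OF assms(1)])
  finally show ?thesis .
qed

lemma one_le_exp1_mult_power: "1 \<le> exp 1 * (1 - 1 / (real d + 1)) ^ d"
proof (cases "d = 0")
  case False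
  define y where "y = (1 + 1 / real d) ^ d"
  have "y = (1 + 1 / real d) powr real d"
    unfolding y_def by (simp add: powr_realpow add_pos_nonneg)
  also have "\<dots> < exp 1"
    using exp_1_gt_powr[of "real d"] False by simp
  finally have "y < exp 1" .
  moreover have "0 < y"
    unfolding y_def by (simp add: add_pos_nonneg)
  ultimately have "1 \<le> exp 1 * (1 / y)"
    by (simp add: field_simps)
  moreover have "1 - 1 / (real d + 1) = 1 / (1 + 1 / real d)"
    using False by (simp add: field_simps)
  then have "(1 - 1 / (real d + 1)) ^ d = 1 / y"
    unfolding y_def by (simp add: power_one_over)
  ultimately show ?thesis
    by simp
qed simp

lemma card_le_exp1_by_random_subset:
  fixes \<beta> :: real and E :: "'k set" and A C :: "'k \<Rightarrow> 'a set"
  assumes "finite X" "finite E" "1 \<le> a"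
    and events: "\<And>k. k \<in> E \<Longrightarrow> A k \<subseteq> X \<and> C k \<subseteq> X \<and> A k \<inter> C k = {} \<and> card (A k) = a \<and> card (C k) \<le> d"
    and count: "\<And>S. S \<subseteq> X \<Longrightarrow> real (card {k \<in> E. A k \<subseteq> S \<and> S \<inter> C k = {}}) \<le> \<beta> * real (card S)"
  shows "real (card E) \<le> exp 1 * (real d + 1) ^ (a - 1) * \<beta> * real (card X)"
proof -
  define p where "p = 1 / (real d + 1)"
  have moment: "p ^ a * (1 - p) ^ d * real (card E) \<le> \<beta> * p * real (card X)"
    by (rule card_le_by_random_subset[OF assms(1,2) _ _ events count]) (auto simp: p_def)
  have "(real d + 1) * p = 1"
    unfolding p_def by simp
  then have dp: "(real d + 1) ^ a * p ^ a = 1"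
    by (metis power_mult_distrib power_one)
  have "real (card E) \<le> exp 1 * (1 - p) ^ d * real (card E)"
    using mult_right_mono[OF one_le_exp1_mult_power[of d], of "real (card E)"] by (simp add: p_def)
  also have "\<dots> = exp 1 * ((real d + 1) ^ a * p ^ a) * ((1 - p) ^ d * real (card E))"
    by (simp add: dp)
  also have "\<dots> = exp 1 * (real d + 1) ^ a * (p ^ a * (1 - p) ^ d * real (card E))"
    by (simp only: ac_simps)
  also have "\<dots> \<le> exp 1 * (real d + 1) ^ a * (\<beta> * p * real (card X))"
    using moment by (intro mult_left_mono) auto
  also have "\<dots> = exp 1 * (real d + 1) ^ (a - 1) * \<beta> * real (card X)"
    using \<open>1 \<le> a\<close> by (cases a) (simp_all add: p_def)
  finally show ?thesis .
qed

definition rainbow_pairs :: "('a \<Rightarrow> 'a \<Rightarrow> colour) \<Rightarrow> colour \<Rightarrow> 'a set \<Rightarrow> 'a \<Rightarrow> 'a set set" where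
  "rainbow_pairs c q X y = {{x1, x2} | x1 x2. x1 \<in> X \<and> x2 \<in> X \<and> c x1 x2 = q \<and> rainbow c y x1 x2}"

lemma tau_rb_eq_card_Sigma: "tau_rb q c X Y = card (Sigma Y (rainbow_pairs c q X))"
  unfolding tau_rb_def rainbow_pairs_def by (rule arg_cong[where f = card]) blast

lemma finite_rainbow_pairs: "finite X \<Longrightarrow> finite (rainbow_pairs c q X y)"
  by (rule finite_subset[of _ "Pow X"]) (auto simp: rainbow_pairs_def)

lemma rainbow_pairs_restrict_iff:
  "S \<subseteq> X \<Longrightarrow> e \<in> rainbow_pairs c q S y \<longleftrightarrow> e \<in> rainbow_pairs c q X y \<and> e \<subseteq> S"
  unfolding rainbow_pairs_def by blast

lemma green_rainbow_pairD:
  "e \<in> rainbow_pairs c G X y \<Longrightarrow> e \<subseteq> X \<and> card e = 2 \<and> e \<inter> green_nbhd V c y = {}"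
  unfolding rainbow_pairs_def rainbow_def green_nbhd_def by auto

lemma rainbow_swap:
  assumes "edge_colouring V c" "b \<in> V" "d \<in> V" "rainbow c a b d"
  shows "rainbow c a d b"
  using assms unfolding edge_colouring_def rainbow_def by metis

lemma rainbow_rotate:
  assumes "edge_colouring V c" "a \<in> V" "b \<in> V" "d \<in> V" "rainbow c a b d"
  shows "rainbow c b d a"
  using assms unfolding edge_colouring_def rainbow_def by metis

lemma rainbow_pairs_memD:
  assumes colouring: "edge_colouring V c" and "X \<subseteq> V" "y \<in> V" "{u, v} \<in> rainbow_pairs c q X y"
  shows "u \<in> X \<and> v \<in> X \<and> c u v = q \<and> rainbow c y u v"
proof -
  obtain x1 x2 where x: "{u, v} = {x1, x2}" "x1 \<in> X" "x2 \<in> X" "c x1 x2 = q" "rainbow c y x1 x2"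
    using assms(4) unfolding rainbow_pairs_def by blast
  then consider "u = x1" "v = x2" | "u = x2" "v = x1"
    by (auto simp: doubleton_eq_iff)
  then show ?thesis
  proof cases
    case 2
    then show ?thesis
      using x \<open>X \<subseteq> V\<close> rainbow_swap[OF colouring] colouring
      unfolding edge_colouring_def by (metis subsetD)
  qed (use x in simp)
qed

lemma almost_gallaiD:
  "almost_gallai V c \<Longrightarrow> a \<in> V \<Longrightarrow> b \<in> V \<Longrightarrow> u \<in> V \<Longrightarrow> v \<in> V \<Longrightarrow>
    rainbow c a b u \<Longrightarrow> rainbow c a b v \<Longrightarrow> u = v"
  unfolding almost_gallai_def by blast

lemma rainbow_pairs_cut_matching_family:
  assumes colouring: "edge_colouring V c" and gallai: "almost_gallai V c"
    and "S \<subseteq> V" "Y \<subseteq> V" "Y \<inter> S = {}"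
    and no_green: "\<And>y x. y \<in> Y \<Longrightarrow> x \<in> S \<Longrightarrow> c y x \<noteq> G"
  shows "cut_matching_family S Y (rainbow_pairs c G S) (\<lambda>y. {x. c y x = R})"
proof
  have memD: "u \<in> S \<and> v \<in> S \<and> c u v = G \<and> rainbow c i u v"
    if "i \<in> Y" "{u, v} \<in> rainbow_pairs c G S i" for i u v
    using rainbow_pairs_memD[OF colouring \<open>S \<subseteq> V\<close>] that \<open>Y \<subseteq> V\<close> by blast
  {
    fix i e assume i: "i \<in> Y" and e: "e \<in> rainbow_pairs c G S i"
    then obtain u v where uv: "e = {u, v}" "u \<in> S" "v \<in> S" "c u v = G" "rainbow c i u v"
      unfolding rainbow_pairs_def by blast
    then have "c i u = R \<and> c i v = B \<or> c i u = B \<and> c i v = R"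
      unfolding rainbow_def by (cases "c i u"; cases "c i v") auto
    then show "\<exists>u v. e = {u, v} \<and> u \<in> S \<and> v \<in> S \<and> u \<in> {x. c i x = R} \<and> v \<notin> {x. c i x = R}"
    proof
      assume "c i u = R \<and> c i v = B"
      then show ?thesis
        using uv by (intro exI[of _ u] exI[of _ v]) auto
    next
      assume "c i u = B \<and> c i v = R"
      then show ?thesis
        using uv by (intro exI[of _ v] exI[of _ u]) (auto simp: insert_commute)
    qed
  next
    fix i u v w assume "i \<in> Y" "{u, v} \<in> rainbow_pairs c G S i" "{u, w} \<in> rainbow_pairs c G S i"
    then show "v = w"
      using memD almost_gallaiD[OF gallai, of i u v w] \<open>S \<subseteq> V\<close> \<open>Y \<subseteq> V\<close> by blast
  next
    fix i j assume ij: "i \<in> Y" "j \<in> Y" "i \<noteq> j"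
    show "rainbow_pairs c G S i \<inter> rainbow_pairs c G S j = {}"
    proof (rule ccontr)
      assume "rainbow_pairs c G S i \<inter> rainbow_pairs c G S j \<noteq> {}"
      then obtain u v where "{u, v} \<in> rainbow_pairs c G S i" "{u, v} \<in> rainbow_pairs c G S j"
        unfolding rainbow_pairs_def by blast
      then have "rainbow c i u v" "rainbow c j u v" "u \<in> V" "v \<in> V" "i \<in> V" "j \<in> V"
        using memD ij \<open>S \<subseteq> V\<close> \<open>Y \<subseteq> V\<close> by blast+
      then have "rainbow c u v i" "rainbow c u v j"
        using rainbow_rotate[OF colouring] by blast+
      then show False
        using almost_gallaiD[OF gallai, of u v i j] \<open>u \<in> V\<close> \<open>v \<in> V\<close> \<open>i \<in> V\<close> \<open>j \<in> V\<close> ij(3)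
        by blast
    qed
  next
    fix i j u v assume "i \<in> Y" "j \<in> Y" "{u, v} \<in> rainbow_pairs c G S j"
      and "u \<in> {x. c i x = R}" "v \<notin> {x. c i x = R}"
    moreover have "u \<in> S" "v \<in> S" "c u v = G" "u \<noteq> v"
      using memD[OF \<open>j \<in> Y\<close> \<open>{u, v} \<in> rainbow_pairs c G S j\<close>] unfolding rainbow_def by blast+
    moreover have "i \<noteq> u" "i \<noteq> v"
      using \<open>i \<in> Y\<close> \<open>u \<in> S\<close> \<open>v \<in> S\<close> \<open>Y \<inter> S = {}\<close> by auto
    moreover have "c i v = B"
      using \<open>v \<notin> {x. c i x = R}\<close> no_green[OF \<open>i \<in> Y\<close> \<open>v \<in> S\<close>] by (cases "c i v") auto
    ultimately have "rainbow c i u v"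
      unfolding rainbow_def by simp
    with \<open>u \<in> S\<close> \<open>v \<in> S\<close> \<open>c u v = G\<close> show "{u, v} \<in> rainbow_pairs c G S i"
      unfolding rainbow_pairs_def by blast
  }
qed

lemma card_green_rainbow_pairs_avoiding_le:
  assumes "finite V" "X \<subseteq> V" "Y \<subseteq> V" "X \<inter> Y = {}" "edge_colouring V c" "almost_gallai V c"
    and "S \<subseteq> X"
  shows "real (card {k \<in> Sigma Y (rainbow_pairs c G X). snd k \<subseteq> S \<and> S \<inter> (green_nbhd V c (fst k) \<inter> X) = {}})
    \<le> real (card S) / 2 * log 2 (card S)"
proof -
  define Y\<^sub>S where "Y\<^sub>S = {y \<in> Y. S \<inter> green_nbhd V c y = {}}"
  have finite: "finite S" "finite Y\<^sub>S"
    using assms(1-3,7) rev_finite_subset[of V] unfolding Y\<^sub>S_def by auto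
  have "{k \<in> Sigma Y (rainbow_pairs c G X). snd k \<subseteq> S \<and> S \<inter> (green_nbhd V c (fst k) \<inter> X) = {}}
      = Sigma Y\<^sub>S (rainbow_pairs c G S)"
  proof -
    have "S \<inter> (green_nbhd V c y \<inter> X) = S \<inter> green_nbhd V c y" for y
      using assms(7) by blast
    then show ?thesis
      unfolding Y\<^sub>S_def by (auto simp: rainbow_pairs_restrict_iff[OF assms(7)])
  qed
  also have "real (card \<dots>) = real (\<Sum>y\<in>Y\<^sub>S. card (rainbow_pairs c G S y))"
    using finite by (simp add: finite_rainbow_pairs)
  also have "\<dots> \<le> real (card S) / 2 * log 2 (card S)"
  proof (rule sum_card_cut_matching_family_le[OF finite])
    show "cut_matching_family S Y\<^sub>S (rainbow_pairs c G S) (\<lambda>y. {x. c y x = R})"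
    proof (rule rainbow_pairs_cut_matching_family[OF assms(5,6)])
      show "S \<subseteq> V" "Y\<^sub>S \<subseteq> V" "Y\<^sub>S \<inter> S = {}"
        using assms(2-4,7) unfolding Y\<^sub>S_def by auto
      show "c y x \<noteq> G" if "y \<in> Y\<^sub>S" "x \<in> S" for y x
        using that assms(2,4,7) unfolding Y\<^sub>S_def green_nbhd_def by blast
    qed
  qed
  finally show ?thesis .
qed

theorem lemma5p2:
  fixes V X Y :: "'a set" and c :: "'a \<Rightarrow> 'a \<Rightarrow> colour" and d :: nat
  assumes "finite V"
    and "X \<union> Y = V" and "X \<inter> Y = {}"
    and "edge_colouring V c"
    and "almost_gallai V c"
    and "\<forall>y\<in>Y. card (green_nbhd V c y \<inter> X) \<le> d"
  shows "real (tau_rb G c X Y) \<le> exp 1 / 2 * (real d + 1) * real (card X) * log 2 (real (card X))"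
proof -
  have V: "X \<subseteq> V" "Y \<subseteq> V" and finite: "finite X" "finite Y"
    using assms(1,2) finite_subset by auto
  define E where "E = Sigma Y (rainbow_pairs c G X)"
  define C :: "'a \<times> 'a set \<Rightarrow> 'a set" where "C = (\<lambda>k. green_nbhd V c (fst k) \<inter> X)"
  have "real (card E) \<le> exp 1 * (real d + 1) ^ (2 - 1) * (log 2 (card X) / 2) * real (card X)"
  proof (rule card_le_exp1_by_random_subset[where A = snd and C = C])
    show "finite E"
      using finite by (simp add: E_def finite_rainbow_pairs)
    show "snd k \<subseteq> X \<and> C k \<subseteq> X \<and> snd k \<inter> C k = {} \<and> card (snd k) = 2 \<and> card (C k) \<le> d"
      if "k \<in> E" for k
      using that green_rainbow_pairD[of "snd k" c X "fst k" V] assms(6) unfolding E_def C_def by auto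
    show "real (card {k \<in> E. snd k \<subseteq> S \<and> S \<inter> C k = {}}) \<le> log 2 (card X) / 2 * real (card S)"
      if "S \<subseteq> X" for S
    proof -
      have "real (card {k \<in> E. snd k \<subseteq> S \<and> S \<inter> C k = {}}) \<le> real (card S) / 2 * log 2 (card S)"
        unfolding E_def C_def using assms V that by (intro card_green_rainbow_pairs_avoiding_le) auto
      also have "\<dots> \<le> log 2 (card X) / 2 * real (card S)"
        using card_mono[OF finite(1) that] by (cases "card S = 0") auto
      finally show ?thesis .
    qed
  qed (use finite in auto)
  then show ?thesis
    by (simp add: E_def tau_rb_eq_card_Sigma mult_ac)
qed

end
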